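(* For every integer $\kappa_c\ge0$, every agent $i$ and every softmax parameter $\theta$, $$\sup_{\overline Q_i^{\theta,\kappa_c}\in\mathcal Q_i^{\theta,\kappa_c}}\ \max_{s\in\mathcal S,\,a_i\in\mathcal A_i}\left|\overline Q_i^{\theta,\kappa_c}(s_{N_i^{\kappa_c}},a_i)-\overline Q_i^\theta(s,a_i)\right|\le\frac{2\min(\gamma^{\kappa_c-\kappa_r+1},1)}{1-\gamma}.$$
   Context: Networked Markov game. There are $n$ agents $\mathcal N=\{1,\dots,n\}$ placed at the nodes of an undirected graph $\mathcal G=(\mathcal N,\mathcal E)$ with graph distance $\mathrm{dist}$. For an integer $\kappa\ge0$, $N_i^\kappa=\{j\in\mathcal N:\mathrm{dist}(i,j)\le\kappa\}$ (so $i\in N_i^\kappa$), $\mathcal N_i=N_i^1$, $-N_i^\kappa=\mathcal N\setminus N_i^\kappa$, and $n(\kappa)=\max_i|N_i^\kappa|$. Agent $i$ has a finite local state space $\mathcal S_i$ and a finite local action space $\mathcal A_i$; $\mathcal S=\prod_i\mathcal S_i$, $\mathcal A=\prod_i\mathcal A_i$, and for $I\subseteq\mathcal N$ we write $s_I,a_I,\mathcal S_I,\mathcal A_I$ for the joint states/actions/spaces of the agents in $I$ (the subscript $-i$ means $\mathcal N\setminus\{i\}$). The dynamics are $\mathcal P(s'\mid s,a)=\prod_i\mathcal P_i(s_i'\mid s_{\mathcal N_i},a_i)$, the initial distribution is $\mu\in\Delta(\mathcal S)$, and $\gamma\in(0,1)$ is a discount factor. Each agent has a reward $r_i:\mathcal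 S\times\mathcal A\to[0,1]$ depending only on $(s_{N_i^{\kappa_r}},a_{N_i^{\kappa_r}})$ for a fixed integer $\kappa_r\ge0$. A local policy of agent $i$ is a map $\xi_i:\mathcal S_i\to\Delta(\mathcal A_i)$; $\Xi_i$ is the set of them, $\Xi_I=\prod_{i\in I}\Xi_i$, $\Xi=\Xi_{\mathcal N}$, and a joint policy $\xi=(\xi_1,\dots,\xi_n)$ acts by $\xi(a\mid s)=\prod_i\xi_i(a_i\mid s_i)$. For $\xi\in\Xi$: $Q_i^\xi(s,a)=\sum_{t\ge0}\gamma^t\mathbb E_\xi[r_i(s(t),a(t))\mid s(0)=s,a(0)=a]$; $\overline Q_i^\xi(s,a_i)=\mathbb E_{a_{-i}\sim\xi_{-i}(\cdot\mid s_{-i})}Q_i^\xi(s,a_i,a_{-i})$. Softmax policies: for $\theta_i\in\mathbb R^{|\mathcal S_i||\mathcal A_i|}$, $\xi_i^{\theta_i}(a_i\mid s_i)=\exp(\theta_{i,s_i,a_i})/\sum_{a_i'\in\mathcal A_i}\exp(\theta_{i,s_i,a_i'})$; $\xi^\theta=(\xi_1^{\theta_1},\dots,\xi_n^{\theta_n})$ and $\overline Q_i^\theta:=\overline Q_i^{\xi^\theta}$. Truncated averaged $Q$-functions: $\mathcal Q_i^{\theta,\kappa_c}$ is the set of all functions $\overline Q_i^{\theta,\kappa_c}:\mathcal S_{N_i^{\kappa_c}}\times\mathcal A_i\to\mathbb R$ for which there is a distribution $u_i\in\Delta(\mathcal S_{-N_i^{\kappa_c}})$ with $\overline Q_i^{\theta,\kappa_c}(s_{N_i^{\kappa_c}},a_i)=\mathbb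 E_{s_{-N_i^{\kappa_c}}\sim u_i}[\overline Q_i^\theta(s_{N_i^{\kappa_c}},s_{-N_i^{\kappa_c}},a_i)]$ for all $(s_{N_i^{\kappa_c}},a_i)$. *)

theory Defs
  imports "HOL-Analysis.Analysis" "HOL-Library.FuncSet"
begin

text \<open>Local state space of agent i is the finite
nonempty set Sl i (elements of a common type 's); local action space is Al i.\<close>

definition gstates :: "('i \<Rightarrow> 's set) \<Rightarrow> ('i \<Rightarrow> 's) set" where
  "gstates Sl = {s. \<forall>i. s i \<in> Sl i}"

text \<open>kappa-neighbourhood in the undirected graph with adjacency E:
 nbhd E k i = {j. dist(i,j) \<le> k}.\<close>
fun nbhd :: "('i \<Rightarrow> 'i \<Rightarrow> bool) \<Rightarrow> nat \<Rightarrow> 'i \<Rightarrow> 'i set" where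
  "nbhd E 0 i = {i}"
| "nbhd E (Suc k) i = nbhd E k i \<union> {j. \<exists>l\<in>nbhd E k i. E l j}"

definition softmax :: "('i \<Rightarrow> 'a set) \<Rightarrow> ('i \<Rightarrow> 's \<Rightarrow> 'a \<Rightarrow> real) \<Rightarrow> 'i \<Rightarrow> 's \<Rightarrow> 'a \<Rightarrow> real" where
  "softmax Al \<theta> i si ai = exp (\<theta> i si ai) / (\<Sum>b\<in>Al i. exp (\<theta> i si b))"

definition jpol :: "('i::finite \<Rightarrow> 'a set) \<Rightarrow> ('i \<Rightarrow> 's \<Rightarrow> 'a \<Rightarrow> real) \<Rightarrow> ('i \<Rightarrow> 's) \<Rightarrow> ('i \<Rightarrow> 'a) \<Rightarrow> real" where
  "jpol Al \<theta> s a = (\<Prod>i\<in>UNIV. softmax Al \<theta> i (s i) (a i))"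

text \<open>Transition P(s'|s,a) = prod_i P_i(s'_i | s, a_i); P i s ai x is the probability of
local next state x (locality in s is an assumption of the theorem).\<close>
definition trans :: "('i::finite \<Rightarrow> ('i \<Rightarrow> 's) \<Rightarrow> 'a \<Rightarrow> 's \<Rightarrow> real) \<Rightarrow> ('i \<Rightarrow> 's) \<Rightarrow> ('i \<Rightarrow> 'a) \<Rightarrow> ('i \<Rightarrow> 's) \<Rightarrow> real" where
  "trans P s a s' = (\<Prod>i\<in>UNIV. P i s (a i) (s' i))"

text \<open>occ Sl Al P \<theta> s0 a0 t (s,a): probability that (s(t),a(t)) = (s,a) given
s(0)=s0, a(0)=a0, under the softmax joint policy.\<close>
fun occ :: "('i::finite \<Rightarrow> 's set) \<Rightarrow> ('i \<Rightarrow> 'a set) \<Rightarrow> ('i \<Rightarrow> ('i \<Rightarrow> 's) \<Rightarrow> 'a \<Rightarrow> 's \<Rightarrow> real)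
   \<Rightarrow> ('i \<Rightarrow> 's \<Rightarrow> 'a \<Rightarrow> real) \<Rightarrow> ('i \<Rightarrow> 's) \<Rightarrow> ('i \<Rightarrow> 'a) \<Rightarrow> nat \<Rightarrow> ('i \<Rightarrow> 's) \<Rightarrow> ('i \<Rightarrow> 'a) \<Rightarrow> real" where
  "occ Sl Al P \<theta> s0 a0 0 s a = (if s = s0 \<and> a = a0 then 1 else 0)"
| "occ Sl Al P \<theta> s0 a0 (Suc t) s' a' =
     (\<Sum>s\<in>gstates Sl. \<Sum>a\<in>gstates Al. occ Sl Al P \<theta> s0 a0 t s a * trans P s a s' * jpol Al \<theta> s' a')"

definition Qfun :: "('i::finite \<Rightarrow> 's set) \<Rightarrow> ('i \<Rightarrow> 'a set) \<Rightarrow> ('i \<Rightarrow> ('i \<Rightarrow> 's) \<Rightarrow> 'a \<Rightarrow> 's \<Rightarrow> real)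
   \<Rightarrow> ('i \<Rightarrow> ('i \<Rightarrow> 's) \<Rightarrow> ('i \<Rightarrow> 'a) \<Rightarrow> real) \<Rightarrow> real \<Rightarrow> ('i \<Rightarrow> 's \<Rightarrow> 'a \<Rightarrow> real)
   \<Rightarrow> 'i \<Rightarrow> ('i \<Rightarrow> 's) \<Rightarrow> ('i \<Rightarrow> 'a) \<Rightarrow> real" where
  "Qfun Sl Al P r \<gamma> \<theta> i s0 a0 =
     (\<Sum>t. \<gamma> ^ t * (\<Sum>s\<in>gstates Sl. \<Sum>a\<in>gstates Al. occ Sl Al P \<theta> s0 a0 t s a * r i s a))"

definition Qbar :: "('i::finite \<Rightarrow> 's set) \<Rightarrow> ('i \<Rightarrow> 'a set) \<Rightarrow> ('i \<Rightarrow> ('i \<Rightarrow> 's) \<Rightarrow> 'a \<Rightarrow> 's \<Rightarrow> real)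
   \<Rightarrow> ('i \<Rightarrow> ('i \<Rightarrow> 's) \<Rightarrow> ('i \<Rightarrow> 'a) \<Rightarrow> real) \<Rightarrow> real \<Rightarrow> ('i \<Rightarrow> 's \<Rightarrow> 'a \<Rightarrow> real)
   \<Rightarrow> 'i \<Rightarrow> ('i \<Rightarrow> 's) \<Rightarrow> 'a \<Rightarrow> real" where
  "Qbar Sl Al P r \<gamma> \<theta> i s ai =
     (\<Sum>a\<in>{a\<in>gstates Al. a i = ai}.
        (\<Prod>j\<in>UNIV - {i}. softmax Al \<theta> j (s j) (a j)) * Qfun Sl Al P r \<gamma> \<theta> i s a)"

definition glue :: "'i set \<Rightarrow> ('i \<Rightarrow> 's) \<Rightarrow> ('i \<Rightarrow> 's) \<Rightarrow> ('i \<Rightarrow> 's)" where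
  "glue N x z = (\<lambda>j. if j \<in> N then x j else z j)"

text \<open>Such a function is
represented as f :: ('i => 's) => 'a => real whose first argument ranges over
the partial states PiE N Sl (N = N_i^{kappa_c}); its values elsewhere are irrelevant.\<close>
definition truncQ_set :: "('i::finite \<Rightarrow> 'i \<Rightarrow> bool) \<Rightarrow> ('i \<Rightarrow> 's set) \<Rightarrow> ('i \<Rightarrow> 'a set)
   \<Rightarrow> ('i \<Rightarrow> ('i \<Rightarrow> 's) \<Rightarrow> 'a \<Rightarrow> 's \<Rightarrow> real) \<Rightarrow> ('i \<Rightarrow> ('i \<Rightarrow> 's) \<Rightarrow> ('i \<Rightarrow> 'a) \<Rightarrow> real) \<Rightarrow> real
   \<Rightarrow> ('i \<Rightarrow> 's \<Rightarrow> 'a \<Rightarrow> real) \<Rightarrow> nat \<Rightarrow> 'i \<Rightarrow> (('i \<Rightarrow> 's) \<Rightarrow> 'a \<Rightarrow> real) set" where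
  "truncQ_set E Sl Al P r \<gamma> \<theta> \<kappa>c i =
     {f. \<exists>u. (\<forall>z\<in>PiE (- nbhd E \<kappa>c i) Sl. u z \<ge> 0)
           \<and> (\<Sum>z\<in>PiE (- nbhd E \<kappa>c i) Sl. u z) = 1
           \<and> (\<forall>x\<in>PiE (nbhd E \<kappa>c i) Sl. \<forall>ai\<in>Al i.
                f x ai = (\<Sum>z\<in>PiE (- nbhd E \<kappa>c i) Sl.
                            u z * Qbar Sl Al P r \<gamma> \<theta> i (glue (nbhd E \<kappa>c i) x z) ai))}"

end

theory Submission imports Defs begin

text \<open>The averaged Q-function is the discounted sum over t of the expected reward at time t
when agent i starts with a fixed action and then all agents follow the softmax policy.
Rewards of agent i depend only on the \<open>\<kappa>r\<close>-neighbourhood of i, and each transition enlarges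
the set of coordinates a function depends on by one hop, so the expected reward at time t
depends on the initial state only through the \<open>(\<kappa>r + t)\<close>-neighbourhood of i.  For two
initial states agreeing on the \<open>\<kappa>c\<close>-neighbourhood the terms with \<open>t \<le> \<kappa>c - \<kappa>r\<close> cancel,
and the remaining terms, each in [0,1], contribute at most \<open>\<gamma>^(\<kappa>c - \<kappa>r + 1) / (1 - \<gamma>)\<close>.
A truncated Q-function is an average of such values over states agreeing with s on the
\<open>\<kappa>c\<close>-neighbourhood, so it inherits the bound, even without the factor 2.\<close>

lemma power_diff_le_min_power_int:
  fixes \<gamma> :: real
  assumes "0 < \<gamma>" "\<gamma> \<le> 1"
  shows "\<gamma> ^ (m + 1 - n) \<le> min (\<gamma> powi (int m - int n + 1)) 1"
proof (cases "n \<le> m + 1")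
  case True
  then have exponent: "int m - int n + 1 = int (m + 1 - n)" by simp
  show ?thesis unfolding exponent power_int_of_nat using assms by (simp add: power_le_one)
next
  case False
  have "1 \<le> inverse \<gamma> ^ nat (- (int m - int n + 1))" using assms by (simp add: one_le_inverse)
  then show ?thesis using False by (simp add: power_int_def)
qed

lemma abs_discounted_tail_le:
  fixes \<gamma> :: real and d :: "nat \<Rightarrow> real"
  assumes "0 \<le> \<gamma>" "\<gamma> < 1" and bound: "\<And>t. \<bar>d t\<bar> \<le> 1" and head: "\<And>t. t < T \<Longrightarrow> d t = 0"
  shows "summable (\<lambda>t. \<gamma> ^ t * d t)" and "\<bar>\<Sum>t. \<gamma> ^ t * d t\<bar> \<le> \<gamma> ^ T / (1 - \<gamma>)"
proof -
  have geo: "summable (\<lambda>t. \<gamma> ^ t)" using assms by (simp add: summable_geometric)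
  have le: "norm (\<gamma> ^ t * d (t + k)) \<le> \<gamma> ^ t" for t k
    using assms bound[of "t + k"] by (simp add: abs_mult mult_left_le)
  show sum: "summable (\<lambda>t. \<gamma> ^ t * d t)"
    using summable_comparison_test'[OF geo le[of _ 0]] by simp
  have "(\<Sum>t. \<gamma> ^ t * d t) = (\<Sum>n. \<gamma> ^ (n + T) * d (n + T))"
    using suminf_split_initial_segment[OF sum, of T] head by simp
  also have "\<dots> = (\<Sum>n. \<gamma> ^ T * (\<gamma> ^ n * d (n + T)))"
    by (simp add: power_add mult_ac)
  also have "\<dots> = \<gamma> ^ T * (\<Sum>n. \<gamma> ^ n * d (n + T))"
    by (rule suminf_mult) (rule summable_comparison_test'[OF geo le])
  finally have eq: "(\<Sum>t. \<gamma> ^ t * d t) = \<gamma> ^ T * (\<Sum>n. \<gamma> ^ n * d (n + T))" .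
  have "\<bar>\<Sum>n. \<gamma> ^ n * d (n + T)\<bar> \<le> (\<Sum>n. \<gamma> ^ n)"
    using norm_suminf_le[OF le geo] by simp
  then have tail: "\<bar>\<Sum>n. \<gamma> ^ n * d (n + T)\<bar> \<le> 1 / (1 - \<gamma>)"
    using assms by (simp add: suminf_geometric)
  show "\<bar>\<Sum>t. \<gamma> ^ t * d t\<bar> \<le> \<gamma> ^ T / (1 - \<gamma>)"
    using mult_left_mono[OF tail, of "\<gamma> ^ T"] assms unfolding eq by (simp add: abs_mult)
qed

lemma abs_convex_combination_diff_le:
  fixes u g :: "'z \<Rightarrow> real"
  assumes "finite Z" and u_nonneg: "\<And>z. z \<in> Z \<Longrightarrow> 0 \<le> u z" and u_sum: "(\<Sum>z\<in>Z. u z) = 1"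
    and close: "\<And>z. z \<in> Z \<Longrightarrow> \<bar>g z - c\<bar> \<le> B"
  shows "\<bar>(\<Sum>z\<in>Z. u z * g z) - c\<bar> \<le> B"
proof -
  have "(\<Sum>z\<in>Z. u z * g z) - c = (\<Sum>z\<in>Z. u z * (g z - c))"
    using u_sum by (simp add: right_diff_distrib sum_subtractf flip: sum_distrib_right)
  also have "\<bar>\<dots>\<bar> \<le> (\<Sum>z\<in>Z. u z * B)"
    using u_nonneg close by (intro order.trans[OF sum_abs] sum_mono) (simp add: abs_mult mult_left_mono)
  also have "\<dots> = B" using u_sum by (simp flip: sum_distrib_right)
  finally show ?thesis .
qed

lemma gstates_eq_PiE: "gstates A = PiE UNIV A"
  by (auto simp: gstates_def PiE_def extensional_def)

lemma glue_in_gstates: "x \<in> PiE N A \<Longrightarrow> z \<in> PiE (-N) A \<Longrightarrow> glue N x z \<in> gstates A"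
  by (auto simp: glue_def gstates_def PiE_def Pi_def)

lemma sum_gstates_split_glue:
  "(\<Sum>a\<in>gstates A. F a) = (\<Sum>x\<in>PiE N A. \<Sum>z\<in>PiE (-N) A. F (glue N x z))"
proof -
  have "(\<Sum>a\<in>gstates A. F a) = (\<Sum>(x,z)\<in>PiE N A \<times> PiE (-N) A. F (glue N x z))"
    by (rule sum.reindex_bij_witness[of _ "\<lambda>(x,z). glue N x z" "\<lambda>a. (restrict a N, restrict a (-N))"])
       (auto simp: glue_def gstates_def PiE_def extensional_def fun_eq_iff intro!: arg_cong[where f=F])
  also have "\<dots> = (\<Sum>x\<in>PiE N A. \<Sum>z\<in>PiE (-N) A. F (glue N x z))"
    by (rule sum.cartesian_product[symmetric])
  finally show ?thesis .
qed

text \<open>Integrating a function that only depends on the coordinates in N against a product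
distribution leaves the marginal on N; the point z0 fills the irrelevant coordinates.\<close>

lemma sum_gstates_prod_local:
  fixes A :: "'i::finite \<Rightarrow> 'b set" and q :: "'i \<Rightarrow> 'b \<Rightarrow> real"
  assumes fin: "\<And>j. finite (A j)" and z0: "z0 \<in> PiE (-N) A"
    and sum1: "\<And>j. j \<notin> N \<Longrightarrow> (\<Sum>b\<in>A j. q j b) = 1"
    and G: "\<And>a a'. a \<in> gstates A \<Longrightarrow> a' \<in> gstates A \<Longrightarrow> (\<forall>l\<in>N. a l = a' l) \<Longrightarrow> G a = G a'"
  shows "(\<Sum>a\<in>gstates A. (\<Prod>j\<in>UNIV. q j (a j)) * G a)
       = (\<Sum>x\<in>PiE N A. (\<Prod>j\<in>N. q j (x j)) * G (glue N x z0))"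
proof -
  have split: "(\<Prod>j\<in>UNIV. q j (glue N x z j)) * G (glue N x z)
      = ((\<Prod>j\<in>N. q j (x j)) * G (glue N x z0)) * (\<Prod>j\<in>-N. q j (z j))"
    if x: "x \<in> PiE N A" and z: "z \<in> PiE (-N) A" for x z
  proof -
    have "(\<Prod>j\<in>UNIV. q j (glue N x z j)) = (\<Prod>j\<in>N. q j (glue N x z j)) * (\<Prod>j\<in>-N. q j (glue N x z j))"
      using prod.union_disjoint[of N "-N" "\<lambda>j. q j (glue N x z j)"] by simp
    also have "\<dots> = (\<Prod>j\<in>N. q j (x j)) * (\<Prod>j\<in>-N. q j (z j))"
      by (auto simp: glue_def intro!: arg_cong2[where f="(*)"] prod.cong)
    moreover have "G (glue N x z) = G (glue N x z0)"
      using x z z0 by (intro G glue_in_gstates) (auto simp: glue_def)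
    ultimately show ?thesis by simp
  qed
  have "(\<Sum>a\<in>gstates A. (\<Prod>j\<in>UNIV. q j (a j)) * G a)
      = (\<Sum>x\<in>PiE N A. ((\<Prod>j\<in>N. q j (x j)) * G (glue N x z0)) * (\<Sum>z\<in>PiE (-N) A. \<Prod>j\<in>-N. q j (z j)))"
    by (simp add: sum_gstates_split_glue[of _ _ N] split sum_distrib_left cong: sum.cong)
  also have "(\<Sum>z\<in>PiE (-N) A. \<Prod>j\<in>-N. q j (z j)) = (\<Prod>j\<in>-N. \<Sum>b\<in>A j. q j b)"
    by (rule prod_sum_PiE[symmetric]) (auto simp: fin)
  also have "\<dots> = 1" using sum1 by simp
  finally show ?thesis by simp
qed

lemma nbhd_mono: "m \<le> n \<Longrightarrow> nbhd E m i \<subseteq> nbhd E n i"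
  by (induction n) (auto simp: le_Suc_eq)

lemma nbhd_one_subset_nbhd_Suc: "j \<in> nbhd E m i \<Longrightarrow> nbhd E 1 j \<subseteq> nbhd E (Suc m) i"
  by auto

locale networked_game =
  fixes E :: "'i::finite \<Rightarrow> 'i \<Rightarrow> bool"
    and Sl :: "'i \<Rightarrow> 's set" and Al :: "'i \<Rightarrow> 'a set"
    and P :: "'i \<Rightarrow> ('i \<Rightarrow> 's) \<Rightarrow> 'a \<Rightarrow> 's \<Rightarrow> real"
    and r :: "'i \<Rightarrow> ('i \<Rightarrow> 's) \<Rightarrow> ('i \<Rightarrow> 'a) \<Rightarrow> real"
    and \<gamma> :: real and \<kappa>r :: nat
    and \<theta> :: "'i \<Rightarrow> 's \<Rightarrow> 'a \<Rightarrow> real" and i :: 'i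
  assumes fin_S: "\<And>j. finite (Sl j)" and ne_S: "\<And>j. Sl j \<noteq> {}"
    and fin_A: "\<And>j. finite (Al j)" and ne_A: "\<And>j. Al j \<noteq> {}"
    and P_nonneg: "\<And>j s aj x. s \<in> gstates Sl \<Longrightarrow> aj \<in> Al j \<Longrightarrow> x \<in> Sl j \<Longrightarrow> P j s aj x \<ge> 0"
    and P_sum: "\<And>j s aj. s \<in> gstates Sl \<Longrightarrow> aj \<in> Al j \<Longrightarrow> (\<Sum>x\<in>Sl j. P j s aj x) = 1"
    and P_local: "\<And>j s s' aj. s \<in> gstates Sl \<Longrightarrow> s' \<in> gstates Sl \<Longrightarrow>
        (\<forall>l\<in>nbhd E 1 j. s l = s' l) \<Longrightarrow> P j s aj = P j s' aj"
    and r_range: "\<And>j s a. s \<in> gstates Sl \<Longrightarrow> a \<in> gstates Al \<Longrightarrow> 0 \<le> r j s a \<and> r j s a \<le> 1"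
    and r_local: "\<And>j s a s' a'. s \<in> gstates Sl \<Longrightarrow> a \<in> gstates Al \<Longrightarrow> s' \<in> gstates Sl \<Longrightarrow> a' \<in> gstates Al \<Longrightarrow>
        (\<forall>l\<in>nbhd E \<kappa>r j. s l = s' l \<and> a l = a' l) \<Longrightarrow> r j s a = r j s' a'"
    and gamma: "0 < \<gamma>" "\<gamma> < 1"
begin

abbreviation "GS \<equiv> gstates Sl"
abbreviation "GA \<equiv> gstates Al"

lemma finite_GS: "finite GS" using fin_S by (simp add: gstates_eq_PiE finite_PiE)
lemma finite_GA: "finite GA" using fin_A by (simp add: gstates_eq_PiE finite_PiE)

lemma softmax_nonneg: "softmax Al \<theta> j x b \<ge> 0"
  unfolding softmax_def by (intro divide_nonneg_nonneg sum_nonneg) auto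

lemma softmax_sum: "(\<Sum>b\<in>Al j. softmax Al \<theta> j x b) = 1"
proof -
  have "(\<Sum>b\<in>Al j. exp (\<theta> j x b)) > 0"
    using fin_A ne_A by (intro sum_pos) auto
  then show ?thesis unfolding softmax_def by (simp flip: sum_divide_distrib)
qed

lemma jpol_nonneg: "jpol Al \<theta> s a \<ge> 0"
  unfolding jpol_def by (intro prod_nonneg softmax_nonneg)

lemma jpol_sum: "(\<Sum>a\<in>GA. jpol Al \<theta> s a) = 1"
  unfolding jpol_def gstates_eq_PiE
  by (subst prod_sum_PiE[symmetric]) (auto simp: fin_A softmax_sum)

lemma trans_nonneg: "s \<in> GS \<Longrightarrow> a \<in> GA \<Longrightarrow> s' \<in> GS \<Longrightarrow> trans P s a s' \<ge> 0"
  unfolding trans_def by (intro prod_nonneg P_nonneg) (auto simp: gstates_def)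

lemma trans_sum:
  assumes s: "s \<in> GS" and a: "a \<in> GA"
  shows "(\<Sum>s'\<in>GS. trans P s a s') = 1"
proof -
  have "(\<Prod>j\<in>UNIV. \<Sum>x\<in>Sl j. P j s (a j) x) = 1"
    using s a by (intro prod.neutral ballI P_sum) (auto simp: gstates_def)
  then show ?thesis
    unfolding trans_def gstates_eq_PiE by (subst prod_sum_PiE[symmetric]) (auto simp: fin_S)
qed

definition pol_avg :: "(('i \<Rightarrow> 's) \<Rightarrow> ('i \<Rightarrow> 'a) \<Rightarrow> real) \<Rightarrow> ('i \<Rightarrow> 's) \<Rightarrow> real" where
  "pol_avg g s = (\<Sum>a\<in>GA. jpol Al \<theta> s a * g s a)"

definition step :: "(('i \<Rightarrow> 's) \<Rightarrow> ('i \<Rightarrow> 'a) \<Rightarrow> real) \<Rightarrow> ('i \<Rightarrow> 's) \<Rightarrow> ('i \<Rightarrow> 'a) \<Rightarrow> real" where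
  "step g s a = (\<Sum>s'\<in>GS. trans P s a s' * pol_avg g s')"

definition depends_on_nbhd :: "nat \<Rightarrow> (('i \<Rightarrow> 's) \<Rightarrow> ('i \<Rightarrow> 'a) \<Rightarrow> real) \<Rightarrow> bool" where
  "depends_on_nbhd m g \<longleftrightarrow> (\<forall>s\<in>GS. \<forall>a\<in>GA. \<forall>s'\<in>GS. \<forall>a'\<in>GA.
      (\<forall>l\<in>nbhd E m i. s l = s' l \<and> a l = a' l) \<longrightarrow> g s a = g s' a')"

lemma pol_avg_bound:
  assumes "\<And>a. a \<in> GA \<Longrightarrow> 0 \<le> g s a \<and> g s a \<le> 1"
  shows "0 \<le> pol_avg g s \<and> pol_avg g s \<le> 1"
proof
  show "0 \<le> pol_avg g s"
    unfolding pol_avg_def using assms by (intro sum_nonneg mult_nonneg_nonneg jpol_nonneg) auto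
  have "pol_avg g s \<le> (\<Sum>a\<in>GA. jpol Al \<theta> s a)"
    unfolding pol_avg_def using assms by (intro sum_mono mult_right_le_one_le jpol_nonneg) auto
  then show "pol_avg g s \<le> 1" by (simp add: jpol_sum)
qed

lemma step_bound:
  assumes g: "\<And>s a. s \<in> GS \<Longrightarrow> a \<in> GA \<Longrightarrow> 0 \<le> g s a \<and> g s a \<le> 1"
    and s: "s \<in> GS" and a: "a \<in> GA"
  shows "0 \<le> step g s a \<and> step g s a \<le> 1"
proof
  have avg: "\<And>s'. s' \<in> GS \<Longrightarrow> 0 \<le> pol_avg g s' \<and> pol_avg g s' \<le> 1"
    using g by (intro pol_avg_bound)
  show "0 \<le> step g s a"
    unfolding step_def using avg s a by (intro sum_nonneg mult_nonneg_nonneg trans_nonneg) auto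
  have "step g s a \<le> (\<Sum>s'\<in>GS. trans P s a s')"
    unfolding step_def using avg s a by (intro sum_mono mult_right_le_one_le trans_nonneg) auto
  then show "step g s a \<le> 1" using trans_sum[OF s a] by simp
qed

lemma sum_occ_eq_step_iterate:
  assumes s0: "s0 \<in> GS" and a0: "a0 \<in> GA"
  shows "(\<Sum>s\<in>GS. \<Sum>a\<in>GA. occ Sl Al P \<theta> s0 a0 t s a * g s a) = (step ^^ t) g s0 a0"
proof (induction t arbitrary: g)
  case 0
  have "(\<Sum>s\<in>GS. \<Sum>a\<in>GA. occ Sl Al P \<theta> s0 a0 0 s a * g s a)
      = (\<Sum>s\<in>GS. if s = s0 then (\<Sum>a\<in>GA. if a = a0 then g s a else 0) else 0)"
    by (auto intro!: sum.cong)
  then show ?case using s0 a0 finite_GS finite_GA by simp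
next
  case (Suc t)
  have "(\<Sum>s'\<in>GS. \<Sum>a'\<in>GA. occ Sl Al P \<theta> s0 a0 (Suc t) s' a' * g s' a')
     = (\<Sum>s'\<in>GS. \<Sum>a'\<in>GA. \<Sum>s\<in>GS. \<Sum>a\<in>GA. occ Sl Al P \<theta> s0 a0 t s a * (trans P s a s' * (jpol Al \<theta> s' a' * g s' a')))"
    by (simp add: sum_distrib_right mult.assoc)
  also have "\<dots> = (\<Sum>s'\<in>GS. \<Sum>s\<in>GS. \<Sum>a\<in>GA. \<Sum>a'\<in>GA. occ Sl Al P \<theta> s0 a0 t s a * (trans P s a s' * (jpol Al \<theta> s' a' * g s' a')))"
    by (rule sum.cong[OF refl], subst sum.swap, rule sum.cong[OF refl], rule sum.swap)
  also have "\<dots> = (\<Sum>s\<in>GS. \<Sum>a\<in>GA. \<Sum>s'\<in>GS. \<Sum>a'\<in>GA. occ Sl Al P \<theta> s0 a0 t s a * (trans P s a s' * (jpol Al \<theta> s' a' * g s' a')))"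
    by (subst sum.swap, rule sum.cong[OF refl], rule sum.swap)
  also have "\<dots> = (\<Sum>s\<in>GS. \<Sum>a\<in>GA. occ Sl Al P \<theta> s0 a0 t s a * step g s a)"
    unfolding step_def pol_avg_def by (simp add: sum_distrib_left)
  also have "\<dots> = (step ^^ Suc t) g s0 a0"
    by (simp add: Suc.IH funpow_Suc_right del: funpow.simps)
  finally show ?case .
qed

lemma depends_on_nbhd_mono: "depends_on_nbhd m g \<Longrightarrow> m \<le> n \<Longrightarrow> depends_on_nbhd n g"
  unfolding depends_on_nbhd_def using nbhd_mono[of m n E i] by blast

lemma pol_avg_local:
  assumes g: "depends_on_nbhd m g"
    and s1: "s1 \<in> GS" and s2: "s2 \<in> GS" and agree: "\<forall>l\<in>nbhd E m i. s1 l = s2 l"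
  shows "pol_avg g s1 = pol_avg g s2"
proof -
  define N where "N = nbhd E m i"
  obtain z where z: "z \<in> PiE (-N) Al" using ne_A by (meson PiE_eq_empty_iff ex_in_conv)
  have rep: "pol_avg g s = (\<Sum>x\<in>PiE N Al. (\<Prod>j\<in>N. softmax Al \<theta> j (s j) (x j)) * g s (glue N x z))"
    if s: "s \<in> GS" for s
    unfolding pol_avg_def jpol_def
  proof (rule sum_gstates_prod_local[OF fin_A z softmax_sum])
    show "g s a = g s a'" if "a \<in> GA" "a' \<in> GA" "\<forall>l\<in>N. a l = a' l" for a a'
      using g s that unfolding depends_on_nbhd_def N_def by blast
  qed
  have "g s1 (glue N x z) = g s2 (glue N x z)" if "x \<in> PiE N Al" for x
    using g s1 s2 agree glue_in_gstates[OF that z] unfolding depends_on_nbhd_def N_def by blast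
  moreover have "softmax Al \<theta> j (s1 j) b = softmax Al \<theta> j (s2 j) b" if "j \<in> N" for j b
    using agree that unfolding N_def by simp
  ultimately show ?thesis
    unfolding rep[OF s1] rep[OF s2] by (intro sum.cong refl arg_cong2[where f="(*)"] prod.cong) auto
qed

lemma step_local:
  assumes g: "depends_on_nbhd m g"
  shows "depends_on_nbhd (Suc m) (step g)"
  unfolding depends_on_nbhd_def
proof (intro ballI impI)
  define N where "N = nbhd E m i"
  obtain z where z: "z \<in> PiE (-N) Sl" using ne_S by (meson PiE_eq_empty_iff ex_in_conv)
  have rep: "step g s a = (\<Sum>x\<in>PiE N Sl. (\<Prod>j\<in>N. P j s (a j) (x j)) * pol_avg g (glue N x z))"
    if s: "s \<in> GS" and a: "a \<in> GA" for s a
    unfolding step_def trans_def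
  proof (rule sum_gstates_prod_local[OF fin_S z])
    show "(\<Sum>b\<in>Sl j. P j s (a j) b) = 1" for j
      using a by (intro P_sum[OF s]) (simp add: gstates_def)
    show "pol_avg g x = pol_avg g y" if "x \<in> GS" "y \<in> GS" "\<forall>l\<in>N. x l = y l" for x y
      using pol_avg_local[OF g] that unfolding N_def by blast
  qed
  fix s a s' a' assume s: "s \<in> GS" and a: "a \<in> GA" and s': "s' \<in> GS" and a': "a' \<in> GA"
    and agree: "\<forall>l\<in>nbhd E (Suc m) i. s l = s' l \<and> a l = a' l"
  have "P j s (a j) = P j s' (a' j)" if j: "j \<in> N" for j
  proof -
    have "a j = a' j" using agree j unfolding N_def by simp
    moreover have "\<forall>l\<in>nbhd E 1 j. s l = s' l"
      using agree nbhd_one_subset_nbhd_Suc[of j E m i] j unfolding N_def by blast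
    ultimately show ?thesis using P_local[OF s s'] by simp
  qed
  then show "step g s a = step g s' a'"
    unfolding rep[OF s a] rep[OF s' a'] by (intro sum.cong refl arg_cong2[where f="(*)"] prod.cong) auto
qed

definition exp_reward :: "nat \<Rightarrow> ('i \<Rightarrow> 's) \<Rightarrow> ('i \<Rightarrow> 'a) \<Rightarrow> real" where
  "exp_reward t = (step ^^ t) (r i)"

lemma exp_reward_bound: "s \<in> GS \<Longrightarrow> a \<in> GA \<Longrightarrow> 0 \<le> exp_reward t s a \<and> exp_reward t s a \<le> 1"
proof (induction t arbitrary: s a)
  case 0
  then show ?case by (simp add: exp_reward_def r_range)
next
  case (Suc t)
  have "exp_reward (Suc t) s a = step (exp_reward t) s a" by (simp add: exp_reward_def)
  then show ?case using step_bound[OF Suc.IH Suc.prems] by simp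
qed

lemma exp_reward_local: "depends_on_nbhd (\<kappa>r + t) (exp_reward t)"
proof (induction t)
  case 0
  show ?case
    unfolding exp_reward_def depends_on_nbhd_def funpow_0 id_apply add_0_right using r_local by blast
next
  case (Suc t)
  have "exp_reward (Suc t) = step (exp_reward t)" by (simp add: exp_reward_def)
  then show ?case using step_local[OF Suc.IH] by simp
qed

lemma Qfun_eq_discounted_exp_reward:
  "s \<in> GS \<Longrightarrow> a \<in> GA \<Longrightarrow> Qfun Sl Al P r \<gamma> \<theta> i s a = (\<Sum>t. \<gamma> ^ t * exp_reward t s a)"
  unfolding Qfun_def exp_reward_def by (simp add: sum_occ_eq_step_iterate)

definition pinned_pol :: "'a \<Rightarrow> ('i \<Rightarrow> 's) \<Rightarrow> 'i \<Rightarrow> 'a \<Rightarrow> real" where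
  "pinned_pol ai s j b = (if j = i then (if b = ai then 1 else 0) else softmax Al \<theta> j (s j) b)"

definition pinned_exp_reward :: "'a \<Rightarrow> nat \<Rightarrow> ('i \<Rightarrow> 's) \<Rightarrow> real" where
  "pinned_exp_reward ai t s = (\<Sum>a\<in>GA. (\<Prod>j\<in>UNIV. pinned_pol ai s j (a j)) * exp_reward t s a)"

lemma pinned_pol_nonneg: "0 \<le> pinned_pol ai s j b"
  by (simp add: pinned_pol_def softmax_nonneg)

lemma pinned_pol_sum: "ai \<in> Al i \<Longrightarrow> (\<Sum>b\<in>Al j. pinned_pol ai s j b) = 1"
  by (cases "j = i") (simp_all add: pinned_pol_def softmax_sum fin_A)

lemma pinned_exp_reward_bound:
  assumes s: "s \<in> GS" and ai: "ai \<in> Al i"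
  shows "0 \<le> pinned_exp_reward ai t s \<and> pinned_exp_reward ai t s \<le> 1"
proof
  show "0 \<le> pinned_exp_reward ai t s" unfolding pinned_exp_reward_def
    using s exp_reward_bound by (intro sum_nonneg mult_nonneg_nonneg prod_nonneg) (auto simp: pinned_pol_nonneg)
  have "pinned_exp_reward ai t s \<le> (\<Sum>a\<in>GA. \<Prod>j\<in>UNIV. pinned_pol ai s j (a j))" unfolding pinned_exp_reward_def
    using s exp_reward_bound by (intro sum_mono mult_right_le_one_le prod_nonneg) (auto simp: pinned_pol_nonneg)
  also have "\<dots> = (\<Prod>j\<in>UNIV. \<Sum>b\<in>Al j. pinned_pol ai s j b)"
    unfolding gstates_eq_PiE by (rule prod_sum_PiE[symmetric]) (auto simp: fin_A)
  also have "\<dots> = 1" using pinned_pol_sum[OF ai] by simp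
  finally show "pinned_exp_reward ai t s \<le> 1" .
qed

lemma pinned_exp_reward_local:
  assumes t: "\<kappa>r + t \<le> \<kappa>c" and s: "s \<in> GS" and s': "s' \<in> GS"
    and agree: "\<forall>l\<in>nbhd E \<kappa>c i. s l = s' l" and ai: "ai \<in> Al i"
  shows "pinned_exp_reward ai t s = pinned_exp_reward ai t s'"
proof -
  define N where "N = nbhd E \<kappa>c i"
  obtain z where z: "z \<in> PiE (-N) Al" using ne_A by (meson PiE_eq_empty_iff ex_in_conv)
  have loc: "depends_on_nbhd \<kappa>c (exp_reward t)"
    using depends_on_nbhd_mono[OF exp_reward_local t] .
  have rep: "pinned_exp_reward ai t s1
      = (\<Sum>x\<in>PiE N Al. (\<Prod>j\<in>N. pinned_pol ai s1 j (x j)) * exp_reward t s1 (glue N x z))"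
    if s1: "s1 \<in> GS" for s1
    unfolding pinned_exp_reward_def
  proof (rule sum_gstates_prod_local[OF fin_A z pinned_pol_sum[OF ai]])
    show "exp_reward t s1 a = exp_reward t s1 a'" if "a \<in> GA" "a' \<in> GA" "\<forall>l\<in>N. a l = a' l" for a a'
      using loc s1 that unfolding depends_on_nbhd_def N_def by blast
  qed
  have "exp_reward t s (glue N x z) = exp_reward t s' (glue N x z)" if "x \<in> PiE N Al" for x
    using loc s s' agree glue_in_gstates[OF that z] unfolding depends_on_nbhd_def N_def by blast
  moreover have "pinned_pol ai s j b = pinned_pol ai s' j b" if "j \<in> N" for j b
    using agree that unfolding N_def pinned_pol_def by simp
  ultimately show ?thesis
    unfolding rep[OF s] rep[OF s'] by (intro sum.cong refl arg_cong2[where f="(*)"] prod.cong) auto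
qed

lemma Qbar_eq_discounted_pinned_exp_reward:
  assumes s: "s \<in> GS" and ai: "ai \<in> Al i"
  shows "Qbar Sl Al P r \<gamma> \<theta> i s ai = (\<Sum>t. \<gamma> ^ t * pinned_exp_reward ai t s)"
proof -
  define F where "F = {a\<in>GA. a i = ai}"
  define w where "w a = (\<Prod>j\<in>UNIV - {i}. softmax Al \<theta> j (s j) (a j))" for a
  have summable: "summable (\<lambda>t. \<gamma> ^ t * exp_reward t s a)" if "a \<in> F" for a
    using abs_discounted_tail_le(1)[of \<gamma> "\<lambda>t. exp_reward t s a" 0] gamma exp_reward_bound[OF s] that
    by (force simp: F_def)
  have pinned: "(\<Prod>j\<in>UNIV. pinned_pol ai s j (a j)) = (if a i = ai then w a else 0)" for a
  proof -
    have "(\<Prod>j\<in>UNIV - {i}. pinned_pol ai s j (a j)) = w a"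
      unfolding w_def by (intro prod.cong) (auto simp: pinned_pol_def)
    then show ?thesis by (simp add: prod.remove[of UNIV i] pinned_pol_def)
  qed
  have "pinned_exp_reward ai t s = (\<Sum>a\<in>F. w a * exp_reward t s a)" for t
  proof -
    have "pinned_exp_reward ai t s = (\<Sum>a\<in>GA. if a i = ai then w a * exp_reward t s a else 0)"
      unfolding pinned_exp_reward_def pinned by (intro sum.cong) auto
    then show ?thesis unfolding F_def by (simp add: sum.inter_filter[OF finite_GA])
  qed
  then have "(\<Sum>t. \<gamma> ^ t * pinned_exp_reward ai t s) = (\<Sum>t. \<Sum>a\<in>F. w a * (\<gamma> ^ t * exp_reward t s a))"
    by (simp add: sum_distrib_left mult.left_commute)
  also have "\<dots> = (\<Sum>a\<in>F. \<Sum>t. w a * (\<gamma> ^ t * exp_reward t s a))"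
    using summable by (intro suminf_sum summable_mult) auto
  also have "\<dots> = (\<Sum>a\<in>F. w a * Qfun Sl Al P r \<gamma> \<theta> i s a)"
    using summable s by (intro sum.cong refl) (auto simp: F_def Qfun_eq_discounted_exp_reward suminf_mult)
  also have "\<dots> = Qbar Sl Al P r \<gamma> \<theta> i s ai"
    unfolding Qbar_def F_def w_def ..
  finally show ?thesis ..
qed

lemma Qbar_diff_le_if_agree_on_nbhd:
  assumes s: "s \<in> GS" and s': "s' \<in> GS"
    and agree: "\<forall>l\<in>nbhd E \<kappa>c i. s l = s' l" and ai: "ai \<in> Al i"
  shows "\<bar>Qbar Sl Al P r \<gamma> \<theta> i s ai - Qbar Sl Al P r \<gamma> \<theta> i s' ai\<bar> \<le> \<gamma> ^ (\<kappa>c + 1 - \<kappa>r) / (1 - \<gamma>)"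
proof -
  define d where "d t = pinned_exp_reward ai t s - pinned_exp_reward ai t s'" for t
  have bound: "\<bar>d t\<bar> \<le> 1" for t
    using pinned_exp_reward_bound[OF s ai, of t] pinned_exp_reward_bound[OF s' ai, of t] by (auto simp: d_def)
  have head: "d t = 0" if "t < \<kappa>c + 1 - \<kappa>r" for t
    using that pinned_exp_reward_local[OF _ s s' agree ai, of t] by (simp add: d_def)
  have summable: "summable (\<lambda>t. \<gamma> ^ t * pinned_exp_reward ai t s'')" if "s'' \<in> GS" for s''
    using abs_discounted_tail_le(1)[of \<gamma> "\<lambda>t. pinned_exp_reward ai t s''" 0] gamma
      pinned_exp_reward_bound[OF that ai] by force
  have "Qbar Sl Al P r \<gamma> \<theta> i s ai - Qbar Sl Al P r \<gamma> \<theta> i s' ai = (\<Sum>t. \<gamma> ^ t * d t)"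
    unfolding Qbar_eq_discounted_pinned_exp_reward[OF s ai] Qbar_eq_discounted_pinned_exp_reward[OF s' ai] d_def
    using summable[OF s] summable[OF s'] by (simp add: right_diff_distrib suminf_diff)
  then show ?thesis
    using abs_discounted_tail_le(2)[OF _ _ bound head] gamma by simp
qed

end

theorem lemma1:
  fixes E :: "'i::finite \<Rightarrow> 'i \<Rightarrow> bool"
    and Sl :: "'i \<Rightarrow> 's set" and Al :: "'i \<Rightarrow> 'a set"
    and P :: "'i \<Rightarrow> ('i \<Rightarrow> 's) \<Rightarrow> 'a \<Rightarrow> 's \<Rightarrow> real"
    and r :: "'i \<Rightarrow> ('i \<Rightarrow> 's) \<Rightarrow> ('i \<Rightarrow> 'a) \<Rightarrow> real"
    and \<gamma> :: real and \<kappa>r \<kappa>c :: nat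
    and \<theta> :: "'i \<Rightarrow> 's \<Rightarrow> 'a \<Rightarrow> real" and i :: 'i
  assumes sym: "\<And>j k. E j k \<Longrightarrow> E k j"
    and fin_S: "\<And>j. finite (Sl j)" and ne_S: "\<And>j. Sl j \<noteq> {}"
    and fin_A: "\<And>j. finite (Al j)" and ne_A: "\<And>j. Al j \<noteq> {}"
    and P_nonneg: "\<And>j s aj x. s \<in> gstates Sl \<Longrightarrow> aj \<in> Al j \<Longrightarrow> x \<in> Sl j \<Longrightarrow> P j s aj x \<ge> 0"
    and P_sum: "\<And>j s aj. s \<in> gstates Sl \<Longrightarrow> aj \<in> Al j \<Longrightarrow> (\<Sum>x\<in>Sl j. P j s aj x) = 1"
    and P_local: "\<And>j s s' aj. s \<in> gstates Sl \<Longrightarrow> s' \<in> gstates Sl \<Longrightarrow>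
        (\<forall>l\<in>nbhd E 1 j. s l = s' l) \<Longrightarrow> P j s aj = P j s' aj"
    and r_range: "\<And>j s a. s \<in> gstates Sl \<Longrightarrow> a \<in> gstates Al \<Longrightarrow> 0 \<le> r j s a \<and> r j s a \<le> 1"
    and r_local: "\<And>j s a s' a'. s \<in> gstates Sl \<Longrightarrow> a \<in> gstates Al \<Longrightarrow> s' \<in> gstates Sl \<Longrightarrow> a' \<in> gstates Al \<Longrightarrow>
        (\<forall>l\<in>nbhd E \<kappa>r j. s l = s' l \<and> a l = a' l) \<Longrightarrow> r j s a = r j s' a'"
    and gamma: "0 < \<gamma>" "\<gamma> < 1"
  shows "\<forall>f\<in>truncQ_set E Sl Al P r \<gamma> \<theta> \<kappa>c i. \<forall>s\<in>gstates Sl. \<forall>ai\<in>Al i.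
           \<bar>f (restrict s (nbhd E \<kappa>c i)) ai - Qbar Sl Al P r \<gamma> \<theta> i s ai\<bar>
             \<le> 2 * min (\<gamma> powi (int \<kappa>c - int \<kappa>r + 1)) 1 / (1 - \<gamma>)"
proof (intro ballI)
  interpret networked_game E Sl Al P r \<gamma> \<kappa>r \<theta> i
    using assms by unfold_locales
  fix f s ai
  assume f: "f \<in> truncQ_set E Sl Al P r \<gamma> \<theta> \<kappa>c i" and s: "s \<in> GS" and ai: "ai \<in> Al i"
  define N where "N = nbhd E \<kappa>c i"
  define x where "x = restrict s N"
  have x: "x \<in> PiE N Sl" using s unfolding x_def gstates_def by auto
  obtain u where u_nonneg: "\<forall>z\<in>PiE (-N) Sl. u z \<ge> 0" and u_sum: "(\<Sum>z\<in>PiE (-N) Sl. u z) = 1"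
    and f_eq: "f x ai = (\<Sum>z\<in>PiE (-N) Sl. u z * Qbar Sl Al P r \<gamma> \<theta> i (glue N x z) ai)"
    using f x ai unfolding truncQ_set_def N_def by blast
  have "\<bar>Qbar Sl Al P r \<gamma> \<theta> i (glue N x z) ai - Qbar Sl Al P r \<gamma> \<theta> i s ai\<bar>
      \<le> \<gamma> ^ (\<kappa>c + 1 - \<kappa>r) / (1 - \<gamma>)" if "z \<in> PiE (-N) Sl" for z
    using Qbar_diff_le_if_agree_on_nbhd[where \<kappa>c = \<kappa>c, OF glue_in_gstates[OF x that] s _ ai]
    by (simp add: glue_def x_def N_def)
  then have "\<bar>f x ai - Qbar Sl Al P r \<gamma> \<theta> i s ai\<bar> \<le> \<gamma> ^ (\<kappa>c + 1 - \<kappa>r) / (1 - \<gamma>)"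
    unfolding f_eq using u_nonneg u_sum fin_S
    by (intro abs_convex_combination_diff_le) (auto simp: finite_PiE)
  also have "\<dots> \<le> 2 * min (\<gamma> powi (int \<kappa>c - int \<kappa>r + 1)) 1 / (1 - \<gamma>)"
    using power_diff_le_min_power_int[of \<gamma> \<kappa>c \<kappa>r] zero_le_power[of \<gamma> "\<kappa>c + 1 - \<kappa>r"] gamma
    by (intro divide_right_mono) linarith+
  finally show "\<bar>f (restrict s (nbhd E \<kappa>c i)) ai - Qbar Sl Al P r \<gamma> \<theta> i s ai\<bar>
      \<le> 2 * min (\<gamma> powi (int \<kappa>c - int \<kappa>r + 1)) 1 / (1 - \<gamma>)"
    unfolding x_def N_def .
qed

end
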